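(* Let $C$ be a coalgebra over a field $k$ and let $\sigma:C\otimes C\to k$ be a strong $\mathcal{D}$-map, i.e. a $k$-bilinear map with $\sum\sigma(c_{(1)}\otimes d)c_{(2)}=\sum\sigma(c_{(2)}\otimes d)c_{(1)}$ for all $c,d\in C$. Let $(M,\rho)$ be a right $C$-comodule. Then the map $$R_\sigma:M\otimes M\to M\otimes M,\qquad R_\sigma(m\otimes n)=\sum\sigma(m_{<1>}\otimes n_{<1>})\,m_{<0>}\otimes n_{<0>}$$ is a solution of the Long equation, i.e. $R_\sigma^{12}R_\sigma^{13}=R_\sigma^{13}R_\sigma^{12}$ and $R_\sigma^{12}R_\sigma^{23}=R_\sigma^{23}R_\sigma^{12}$ in $\mathrm{End}_k(M\otimes M\otimes M)$.
   Context: Sweedler notation: $\Delta(c)=\sum c_{(1)}\otimes c_{(2)}$ and $\rho(m)=\sum m_{<0>}\otimes m_{<1>}$. For $R\in\mathrm{End}_k(M\otimes M)$: $R^{12}=R\otimes I$, $R^{23}=I\otimes R$, $R^{13}=(I\otimes\tau)(R\otimes I)(I\otimes\tau)$, where $\tau(m\otimes n)=n\otimes m$. *)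

theory Defs
  imports "HOL-Library.Poly_Mapping"
begin

text \<open>Vector spaces over a field 'k are modelled as free vector spaces
  (finitely supported 'k-valued functions) on a basis 'b (every vector space has a basis).
  The tensor product of spaces with bases 'a, 'b is the free space on 'a \<times> 'b.
  A linear map is given by its values on basis vectors and extended linearly.\<close>

definition smul :: "'k::comm_ring_1 \<Rightarrow> ('b \<Rightarrow>\<^sub>0 'k) \<Rightarrow> ('b \<Rightarrow>\<^sub>0 'k)" where
  "smul s v = Poly_Mapping.map (\<lambda>y. s * y) v"

definition lin :: "('a \<Rightarrow> ('b \<Rightarrow>\<^sub>0 'k::comm_ring_1)) \<Rightarrow> ('a \<Rightarrow>\<^sub>0 'k) \<Rightarrow> ('b \<Rightarrow>\<^sub>0 'k)" where
  "lin f v = (\<Sum>a\<in>Poly_Mapping.keys v. smul (Poly_Mapping.lookup v a) (f a))"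

definition bv :: "'a \<Rightarrow> ('a \<Rightarrow>\<^sub>0 'k::comm_ring_1)" where
  "bv a = Poly_Mapping.single a 1"

definition tprod :: "('a \<Rightarrow>\<^sub>0 'k::comm_ring_1) \<Rightarrow> ('b \<Rightarrow>\<^sub>0 'k) \<Rightarrow> ('a \<times> 'b \<Rightarrow>\<^sub>0 'k)" where
  "tprod u v = (\<Sum>x\<in>Poly_Mapping.keys u. \<Sum>y\<in>Poly_Mapping.keys v. Poly_Mapping.single (x, y) (Poly_Mapping.lookup u x * Poly_Mapping.lookup v y))"

definition tmap :: "('a \<Rightarrow> ('c \<Rightarrow>\<^sub>0 'k::comm_ring_1)) \<Rightarrow> ('b \<Rightarrow> ('d \<Rightarrow>\<^sub>0 'k)) \<Rightarrow> ('a \<times> 'b \<Rightarrow> ('c \<times> 'd \<Rightarrow>\<^sub>0 'k))" where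
  "tmap f g = (\<lambda>(a, b). tprod (f a) (g b))"

definition relabel :: "('a \<Rightarrow> 'b) \<Rightarrow> ('a \<Rightarrow>\<^sub>0 'k::comm_ring_1) \<Rightarrow> ('b \<Rightarrow>\<^sub>0 'k)" where
  "relabel h v = lin (\<lambda>x. bv (h x)) v"

definition assoc3 :: "('a \<times> 'b) \<times> 'c \<Rightarrow> 'a \<times> 'b \<times> 'c" where
  "assoc3 = (\<lambda>((a, b), c). (a, b, c))"

definition coalgebra :: "('c \<Rightarrow> ('c \<times> 'c \<Rightarrow>\<^sub>0 'k::field)) \<Rightarrow> ('c \<Rightarrow> 'k) \<Rightarrow> bool" where
  "coalgebra \<Delta> \<epsilon> \<longleftrightarrow>
     (\<forall>c. relabel assoc3 (lin (tmap \<Delta> bv) (\<Delta> c)) = lin (tmap bv \<Delta>) (\<Delta> c)) \<and>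
     (\<forall>c. lin (\<lambda>(a, b). smul (\<epsilon> a) (bv b)) (\<Delta> c) = bv c) \<and>
     (\<forall>c. lin (\<lambda>(a, b). smul (\<epsilon> b) (bv a)) (\<Delta> c) = bv c)"

definition right_comodule :: "('c \<Rightarrow> ('c \<times> 'c \<Rightarrow>\<^sub>0 'k::field)) \<Rightarrow> ('c \<Rightarrow> 'k)
    \<Rightarrow> ('m \<Rightarrow> ('m \<times> 'c \<Rightarrow>\<^sub>0 'k)) \<Rightarrow> bool" where
  "right_comodule \<Delta> \<epsilon> \<rho> \<longleftrightarrow>
     (\<forall>m. relabel assoc3 (lin (tmap \<rho> bv) (\<rho> m)) = lin (tmap bv \<Delta>) (\<rho> m)) \<and>
     (\<forall>m. lin (\<lambda>(x, a). smul (\<epsilon> a) (bv x)) (\<rho> m) = bv m)"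

text \<open>A bilinear map \<sigma> : C \<otimes> C \<rightarrow> k is determined by its values \<sigma> a b on pairs
  of basis vectors. Strong D-map condition
  \<Sum> \<sigma>(c(1) \<otimes> d) c(2) = \<Sum> \<sigma>(c(2) \<otimes> d) c(1); by bilinearity it suffices
  (and is equivalent) to require it for basis vectors c, d.\<close>
definition strong_D_map :: "('c \<Rightarrow> ('c \<times> 'c \<Rightarrow>\<^sub>0 'k::field)) \<Rightarrow> ('c \<Rightarrow> 'c \<Rightarrow> 'k) \<Rightarrow> bool" where
  "strong_D_map \<Delta> \<sigma> \<longleftrightarrow>
     (\<forall>c d. lin (\<lambda>(a, b). smul (\<sigma> a d) (bv b)) (\<Delta> c) =
            lin (\<lambda>(a, b). smul (\<sigma> b d) (bv a)) (\<Delta> c))"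

definition R_sigma :: "('m \<Rightarrow> ('m \<times> 'c \<Rightarrow>\<^sub>0 'k::field)) \<Rightarrow> ('c \<Rightarrow> 'c \<Rightarrow> 'k)
    \<Rightarrow> 'm \<times> 'm \<Rightarrow> ('m \<times> 'm \<Rightarrow>\<^sub>0 'k)" where
  "R_sigma \<rho> \<sigma> = (\<lambda>(m, n).
      lin (\<lambda>((x, a), (y, b)). smul (\<sigma> a b) (bv (x, y))) (tprod (\<rho> m) (\<rho> n)))"

definition R12 :: "('m \<times> 'm \<Rightarrow> ('m \<times> 'm \<Rightarrow>\<^sub>0 'k::comm_ring_1)) \<Rightarrow> 'm \<times> 'm \<times> 'm \<Rightarrow> ('m \<times> 'm \<times> 'm \<Rightarrow>\<^sub>0 'k)" where
  "R12 R = (\<lambda>(m, n, p). relabel (\<lambda>(x, y). (x, y, p)) (R (m, n)))"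

definition R23 :: "('m \<times> 'm \<Rightarrow> ('m \<times> 'm \<Rightarrow>\<^sub>0 'k::comm_ring_1)) \<Rightarrow> 'm \<times> 'm \<times> 'm \<Rightarrow> ('m \<times> 'm \<times> 'm \<Rightarrow>\<^sub>0 'k)" where
  "R23 R = (\<lambda>(m, n, p). relabel (\<lambda>(y, z). (m, y, z)) (R (n, p)))"

definition R13 :: "('m \<times> 'm \<Rightarrow> ('m \<times> 'm \<Rightarrow>\<^sub>0 'k::comm_ring_1)) \<Rightarrow> 'm \<times> 'm \<times> 'm \<Rightarrow> ('m \<times> 'm \<times> 'm \<Rightarrow>\<^sub>0 'k)" where
  "R13 R = (\<lambda>(m, n, p). relabel (\<lambda>(x, z). (x, n, z)) (R (m, p)))"

text \<open>Composition F G (apply G first) of linear maps given on basis vectors.\<close>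
definition lcomp :: "('b \<Rightarrow> ('c \<Rightarrow>\<^sub>0 'k::comm_ring_1)) \<Rightarrow> ('a \<Rightarrow> ('b \<Rightarrow>\<^sub>0 'k)) \<Rightarrow> ('a \<Rightarrow> ('c \<Rightarrow>\<^sub>0 'k))" where
  "lcomp F G = (\<lambda>e. lin F (G e))"

text \<open>Long equation: R^12 R^13 = R^13 R^12 and R^12 R^23 = R^23 R^12
  (linear maps are equal iff they agree on basis vectors).\<close>
definition long_equation :: "('m \<times> 'm \<Rightarrow> ('m \<times> 'm \<Rightarrow>\<^sub>0 'k::comm_ring_1)) \<Rightarrow> bool" where
  "long_equation R \<longleftrightarrow>
     lcomp (R12 R) (R13 R) = lcomp (R13 R) (R12 R) \<and>
     lcomp (R12 R) (R23 R) = lcomp (R23 R) (R12 R)"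

end

theory Submission
  imports Defs
begin

(* By coassociativity of the coaction, both sides of each equation become a sum over a doubled
   coaction in Sweedler notation:
     R^12 R^13 (m \<otimes> n \<otimes> p) = \<Sum> \<sigma>(m<1>(2), p<1>) \<sigma>(m<1>(1), n<1>) m<0> \<otimes> n<0> \<otimes> p<0>,
     R^13 R^12 (m \<otimes> n \<otimes> p) = \<Sum> \<sigma>(m<1>(2), n<1>) \<sigma>(m<1>(1), p<1>) m<0> \<otimes> n<0> \<otimes> p<0>,
   and the strong D-map identity for c = m<1>, d = p<1>, applied through the linear map \<sigma>(-, n<1>),
   interchanges the two Sweedler factors of m<1>. Likewise R^12 R^23 and R^23 R^12 both split n<1>,
   and the identity for c = n<1>, d = p<1> through \<sigma>(m<1>, -) identifies them. *)

lemma lookup_smul [simp]: "Poly_Mapping.lookup (smul c v) x = c * Poly_Mapping.lookup v x"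
  unfolding smul_def by (simp add: map.rep_eq when_def)

lemma smul_smul [simp]: "smul c (smul d v) = smul (c * d) v"
  by (rule poly_mapping_eqI) (simp add: mult.assoc)

lemma lookup_lin:
  "Poly_Mapping.lookup (lin f v) x =
     (\<Sum>a\<in>Poly_Mapping.keys v. Poly_Mapping.lookup v a * Poly_Mapping.lookup (f a) x)"
  unfolding lin_def by (simp add: lookup_sum)

lemma lookup_lin_superset:
  assumes "finite S" "Poly_Mapping.keys v \<subseteq> S"
  shows "Poly_Mapping.lookup (lin f v) x =
           (\<Sum>a\<in>S. Poly_Mapping.lookup v a * Poly_Mapping.lookup (f a) x)"
  unfolding lookup_lin using assms by (intro sum.mono_neutral_left) (auto simp: in_keys_iff)

lemma lin_add: "lin f (u + v) = lin f u + lin f v"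
proof (rule poly_mapping_eqI)
  fix x
  let ?S = "Poly_Mapping.keys u \<union> Poly_Mapping.keys v"
  have "Poly_Mapping.keys (u + v) \<subseteq> ?S"
    by (simp add: keys_add)
  then show "Poly_Mapping.lookup (lin f (u + v)) x = Poly_Mapping.lookup (lin f u + lin f v) x"
    by (simp add: lookup_lin_superset[of ?S] lookup_add distrib_right sum.distrib)
qed

lemma lin_smul: "lin f (smul c v) = smul c (lin f v)"
proof (rule poly_mapping_eqI)
  fix x
  have "Poly_Mapping.keys (smul c v) \<subseteq> Poly_Mapping.keys v"
    by (auto simp: in_keys_iff)
  then show "Poly_Mapping.lookup (lin f (smul c v)) x = Poly_Mapping.lookup (smul c (lin f v)) x"
    by (simp add: lookup_lin_superset[of "Poly_Mapping.keys v"] sum_distrib_left mult.assoc)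
qed

lemma lin_zero [simp]: "lin f 0 = 0"
  by (simp add: lin_def)

lemma lin_sum: "lin f (\<Sum>i\<in>I. g i) = (\<Sum>i\<in>I. lin f (g i))"
  by (induction I rule: infinite_finite_induct) (simp_all add: lin_add)

lemma lin_bv [simp]: "lin f (bv a) = f a"
  by (rule poly_mapping_eqI) (simp add: bv_def lookup_lin_superset[of "{a}"])

lemma lin_fun_smul: "lin (\<lambda>a. smul c (f a)) v = smul c (lin f v)"
  by (rule poly_mapping_eqI) (simp add: lookup_lin sum_distrib_left mult.left_commute)

lemma lin_lin: "lin f (lin g v) = lin (\<lambda>a. lin f (g a)) v"
  unfolding lin_def[of g v] lin_sum lin_smul by (simp add: lin_def[of "\<lambda>a. lin f (g a)"])

lemma lin_swap: "lin (\<lambda>x. lin (\<lambda>y. F x y) v) u = lin (\<lambda>y. lin (\<lambda>x. F x y) u) v"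
  by (rule poly_mapping_eqI)
    (simp add: lookup_lin sum_distrib_left mult.left_commute sum.swap[where A = "Poly_Mapping.keys u"])

lemma tprod_eq_lin: "tprod u v = lin (\<lambda>x. lin (\<lambda>y. bv (x, y)) v) u"
  by (rule poly_mapping_eqI)
    (auto simp: tprod_def lookup_lin lookup_sum bv_def lookup_single sum_distrib_left when_def
      intro!: sum.cong)

lemma R_sigma_eq:
  "R_sigma \<rho> \<sigma> (m, n) = lin (\<lambda>(x, a). lin (\<lambda>(y, b). smul (\<sigma> a b) (bv (x, y))) (\<rho> n)) (\<rho> m)"
  unfolding R_sigma_def by (simp add: tprod_eq_lin lin_lin case_prod_beta')

lemma R12_R_sigma:
  "R12 (R_sigma \<rho> \<sigma>) (m, n, p) =
     lin (\<lambda>(x, a). lin (\<lambda>(y, b). smul (\<sigma> a b) (bv (x, y, p))) (\<rho> n)) (\<rho> m)"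
  by (simp add: R12_def relabel_def R_sigma_eq lin_lin lin_smul case_prod_beta')

lemma R13_R_sigma:
  "R13 (R_sigma \<rho> \<sigma>) (m, n, p) =
     lin (\<lambda>(x, a). lin (\<lambda>(z, c). smul (\<sigma> a c) (bv (x, n, z))) (\<rho> p)) (\<rho> m)"
  by (simp add: R13_def relabel_def R_sigma_eq lin_lin lin_smul case_prod_beta')

lemma R23_R_sigma:
  "R23 (R_sigma \<rho> \<sigma>) (m, n, p) =
     lin (\<lambda>(y, b). lin (\<lambda>(z, c). smul (\<sigma> b c) (bv (m, y, z))) (\<rho> p)) (\<rho> n)"
  by (simp add: R23_def relabel_def R_sigma_eq lin_lin lin_smul case_prod_beta')

lemma right_comodule_coassoc:
  assumes "right_comodule \<Delta> \<epsilon> \<rho>"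
  shows "lin (\<lambda>(x, c). lin (\<lambda>(y, a). G y a c) (\<rho> x)) (\<rho> m) =
         lin (\<lambda>(x, c). lin (\<lambda>(a, b). G x a b) (\<Delta> c)) (\<rho> m)"
proof -
  have "relabel assoc3 (lin (tmap \<rho> bv) (\<rho> m)) = lin (tmap bv \<Delta>) (\<rho> m)"
    using assms unfolding right_comodule_def by blast
  then have "lin (\<lambda>(y, a, b). G y a b) (relabel assoc3 (lin (tmap \<rho> bv) (\<rho> m))) =
             lin (\<lambda>(y, a, b). G y a b) (lin (tmap bv \<Delta>) (\<rho> m))"
    by simp
  then show ?thesis
    by (simp add: relabel_def lin_lin tmap_def tprod_eq_lin assoc3_def case_prod_beta')
qed

lemma strong_D_map_swap:
  assumes "strong_D_map \<Delta> \<sigma>"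
  shows "lin (\<lambda>(a, b). smul (\<sigma> a d) (f b)) (\<Delta> c) = lin (\<lambda>(a, b). smul (\<sigma> b d) (f a)) (\<Delta> c)"
proof -
  have "lin f (lin (\<lambda>(a, b). smul (\<sigma> a d) (bv b)) (\<Delta> c)) =
        lin f (lin (\<lambda>(a, b). smul (\<sigma> b d) (bv a)) (\<Delta> c))"
    using assms unfolding strong_D_map_def by simp
  then show ?thesis
    by (simp add: lin_lin lin_smul case_prod_beta')
qed

lemma strong_D_map_swap_sum:
  assumes "strong_D_map \<Delta> \<sigma>"
  shows "lin (\<lambda>(a, b). lin (\<lambda>z. smul (\<sigma> a (g z)) (F b z)) w) (\<Delta> c) =
         lin (\<lambda>(a, b). lin (\<lambda>z. smul (\<sigma> b (g z)) (F a z)) w) (\<Delta> c)"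
proof -
  have sum_swap: "\<And>P. lin (\<lambda>(a, b). lin (P a b) w) (\<Delta> c) = lin (\<lambda>z. lin (\<lambda>(a, b). P a b z) (\<Delta> c)) w"
    unfolding case_prod_beta' by (rule lin_swap)
  show ?thesis
    unfolding sum_swap strong_D_map_swap[OF assms] ..
qed

lemma R12_R13_R_sigma:
  assumes "right_comodule \<Delta> \<epsilon> \<rho>"
  shows "lin (R12 (R_sigma \<rho> \<sigma>)) (R13 (R_sigma \<rho> \<sigma>) (m, n, p)) =
    lin (\<lambda>(x, c). lin (\<lambda>(a, b). lin (\<lambda>(z, e). lin (\<lambda>(y, d).
      smul (\<sigma> b e * \<sigma> a d) (bv (x, y, z))) (\<rho> n)) (\<rho> p)) (\<Delta> c)) (\<rho> m)"
proof -
  have "lin (R12 (R_sigma \<rho> \<sigma>)) (R13 (R_sigma \<rho> \<sigma>) (m, n, p)) =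
    lin (\<lambda>(x, c). lin (\<lambda>(z, e). lin (\<lambda>(x', a). lin (\<lambda>(y, d).
      smul (\<sigma> c e * \<sigma> a d) (bv (x', y, z))) (\<rho> n)) (\<rho> x)) (\<rho> p)) (\<rho> m)"
    by (simp add: R12_R_sigma R13_R_sigma lin_lin lin_smul lin_fun_smul[symmetric] case_prod_beta')
  also have "\<dots> = lin (\<lambda>(x, c). lin (\<lambda>(x', a). lin (\<lambda>(z, e). lin (\<lambda>(y, d).
      smul (\<sigma> c e * \<sigma> a d) (bv (x', y, z))) (\<rho> n)) (\<rho> p)) (\<rho> x)) (\<rho> m)"
    unfolding case_prod_beta' by (subst lin_swap) rule
  also have "\<dots> = lin (\<lambda>(x, c). lin (\<lambda>(a, b). lin (\<lambda>(z, e). lin (\<lambda>(y, d).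
      smul (\<sigma> b e * \<sigma> a d) (bv (x, y, z))) (\<rho> n)) (\<rho> p)) (\<Delta> c)) (\<rho> m)"
    by (rule right_comodule_coassoc[OF assms])
  finally show ?thesis .
qed

lemma R13_R12_R_sigma:
  assumes "right_comodule \<Delta> \<epsilon> \<rho>"
  shows "lin (R13 (R_sigma \<rho> \<sigma>)) (R12 (R_sigma \<rho> \<sigma>) (m, n, p)) =
    lin (\<lambda>(x, c). lin (\<lambda>(a, b). lin (\<lambda>(z, e). lin (\<lambda>(y, d).
      smul (\<sigma> b d * \<sigma> a e) (bv (x, y, z))) (\<rho> n)) (\<rho> p)) (\<Delta> c)) (\<rho> m)"
proof -
  have "lin (R13 (R_sigma \<rho> \<sigma>)) (R12 (R_sigma \<rho> \<sigma>) (m, n, p)) =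
    lin (\<lambda>(x, c). lin (\<lambda>(y, d). lin (\<lambda>(x', a). lin (\<lambda>(z, e).
      smul (\<sigma> c d * \<sigma> a e) (bv (x', y, z))) (\<rho> p)) (\<rho> x)) (\<rho> n)) (\<rho> m)"
    by (simp add: R12_R_sigma R13_R_sigma lin_lin lin_smul lin_fun_smul[symmetric] case_prod_beta')
  also have "\<dots> = lin (\<lambda>(x, c). lin (\<lambda>(x', a). lin (\<lambda>(y, d). lin (\<lambda>(z, e).
      smul (\<sigma> c d * \<sigma> a e) (bv (x', y, z))) (\<rho> p)) (\<rho> n)) (\<rho> x)) (\<rho> m)"
    unfolding case_prod_beta' by (subst lin_swap) rule
  also have "\<dots> = lin (\<lambda>(x, c). lin (\<lambda>(a, b). lin (\<lambda>(y, d). lin (\<lambda>(z, e).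
      smul (\<sigma> b d * \<sigma> a e) (bv (x, y, z))) (\<rho> p)) (\<rho> n)) (\<Delta> c)) (\<rho> m)"
    by (rule right_comodule_coassoc[OF assms])
  also have "\<dots> = lin (\<lambda>(x, c). lin (\<lambda>(a, b). lin (\<lambda>(z, e). lin (\<lambda>(y, d).
      smul (\<sigma> b d * \<sigma> a e) (bv (x, y, z))) (\<rho> n)) (\<rho> p)) (\<Delta> c)) (\<rho> m)"
    unfolding case_prod_beta' by (subst (2) lin_swap) rule
  finally show ?thesis .
qed

lemma R12_R13_R_sigma_commute:
  assumes "right_comodule \<Delta> \<epsilon> \<rho>" and "strong_D_map \<Delta> \<sigma>"
  shows "lin (R12 (R_sigma \<rho> \<sigma>)) (R13 (R_sigma \<rho> \<sigma>) (m, n, p)) =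
         lin (R13 (R_sigma \<rho> \<sigma>)) (R12 (R_sigma \<rho> \<sigma>) (m, n, p))"
proof -
  have D_swap: "lin (\<lambda>(a, b). lin (\<lambda>(z, e). lin (\<lambda>(y, d).
      smul (\<sigma> b e * \<sigma> a d) (bv (x, y, z))) (\<rho> n)) (\<rho> p)) (\<Delta> c) =
    lin (\<lambda>(a, b). lin (\<lambda>(z, e). lin (\<lambda>(y, d).
      smul (\<sigma> b d * \<sigma> a e) (bv (x, y, z))) (\<rho> n)) (\<rho> p)) (\<Delta> c)" for x c
    using strong_D_map_swap_sum[OF assms(2), where g = snd and w = "\<rho> p"
        and F = "\<lambda>b z. lin (\<lambda>(y, d). smul (\<sigma> b d) (bv (x, y, fst z))) (\<rho> n)"]
    by (simp add: lin_fun_smul[symmetric] case_prod_beta' mult.commute)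
  show ?thesis
    unfolding R12_R13_R_sigma[OF assms(1)] R13_R12_R_sigma[OF assms(1)] D_swap ..
qed

lemma R12_R23_R_sigma:
  assumes "right_comodule \<Delta> \<epsilon> \<rho>"
  shows "lin (R12 (R_sigma \<rho> \<sigma>)) (R23 (R_sigma \<rho> \<sigma>) (m, n, p)) =
    lin (\<lambda>(y, b). lin (\<lambda>(b1, b2). lin (\<lambda>(z, e). lin (\<lambda>(x, a).
      smul (\<sigma> b2 e * \<sigma> a b1) (bv (x, y, z))) (\<rho> m)) (\<rho> p)) (\<Delta> b)) (\<rho> n)"
proof -
  have "lin (R12 (R_sigma \<rho> \<sigma>)) (R23 (R_sigma \<rho> \<sigma>) (m, n, p)) =
    lin (\<lambda>(y, b). lin (\<lambda>(z, e). lin (\<lambda>(x, a). lin (\<lambda>(y', d).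
      smul (\<sigma> b e * \<sigma> a d) (bv (x, y', z))) (\<rho> y)) (\<rho> m)) (\<rho> p)) (\<rho> n)"
    by (simp add: R12_R_sigma R23_R_sigma lin_lin lin_smul lin_fun_smul[symmetric] case_prod_beta')
  also have "\<dots> = lin (\<lambda>(y, b). lin (\<lambda>(y', d). lin (\<lambda>(z, e). lin (\<lambda>(x, a).
      smul (\<sigma> b e * \<sigma> a d) (bv (x, y', z))) (\<rho> m)) (\<rho> p)) (\<rho> y)) (\<rho> n)"
    unfolding case_prod_beta' by (subst (2) lin_swap, subst lin_swap) rule
  also have "\<dots> = lin (\<lambda>(y, b). lin (\<lambda>(b1, b2). lin (\<lambda>(z, e). lin (\<lambda>(x, a).
      smul (\<sigma> b2 e * \<sigma> a b1) (bv (x, y, z))) (\<rho> m)) (\<rho> p)) (\<Delta> b)) (\<rho> n)"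
    by (rule right_comodule_coassoc[OF assms])
  finally show ?thesis .
qed

lemma R23_R12_R_sigma:
  assumes "right_comodule \<Delta> \<epsilon> \<rho>"
  shows "lin (R23 (R_sigma \<rho> \<sigma>)) (R12 (R_sigma \<rho> \<sigma>) (m, n, p)) =
    lin (\<lambda>(y, b). lin (\<lambda>(b1, b2). lin (\<lambda>(z, e). lin (\<lambda>(x, a).
      smul (\<sigma> a b2 * \<sigma> b1 e) (bv (x, y, z))) (\<rho> m)) (\<rho> p)) (\<Delta> b)) (\<rho> n)"
proof -
  have "lin (R23 (R_sigma \<rho> \<sigma>)) (R12 (R_sigma \<rho> \<sigma>) (m, n, p)) =
    lin (\<lambda>(x, a). lin (\<lambda>(y, b). lin (\<lambda>(y', d). lin (\<lambda>(z, e).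
      smul (\<sigma> a b * \<sigma> d e) (bv (x, y', z))) (\<rho> p)) (\<rho> y)) (\<rho> n)) (\<rho> m)"
    by (simp add: R12_R_sigma R23_R_sigma lin_lin lin_smul lin_fun_smul[symmetric] case_prod_beta')
  also have "\<dots> = lin (\<lambda>(y, b). lin (\<lambda>(y', d). lin (\<lambda>(x, a). lin (\<lambda>(z, e).
      smul (\<sigma> a b * \<sigma> d e) (bv (x, y', z))) (\<rho> p)) (\<rho> m)) (\<rho> y)) (\<rho> n)"
    unfolding case_prod_beta' by (subst lin_swap, subst (2) lin_swap) rule
  also have "\<dots> = lin (\<lambda>(y, b). lin (\<lambda>(b1, b2). lin (\<lambda>(x, a). lin (\<lambda>(z, e).
      smul (\<sigma> a b2 * \<sigma> b1 e) (bv (x, y, z))) (\<rho> p)) (\<rho> m)) (\<Delta> b)) (\<rho> n)"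
    by (rule right_comodule_coassoc[OF assms])
  also have "\<dots> = lin (\<lambda>(y, b). lin (\<lambda>(b1, b2). lin (\<lambda>(z, e). lin (\<lambda>(x, a).
      smul (\<sigma> a b2 * \<sigma> b1 e) (bv (x, y, z))) (\<rho> m)) (\<rho> p)) (\<Delta> b)) (\<rho> n)"
    unfolding case_prod_beta' by (subst (2) lin_swap) rule
  finally show ?thesis .
qed

lemma R12_R23_R_sigma_commute:
  assumes "right_comodule \<Delta> \<epsilon> \<rho>" and "strong_D_map \<Delta> \<sigma>"
  shows "lin (R12 (R_sigma \<rho> \<sigma>)) (R23 (R_sigma \<rho> \<sigma>) (m, n, p)) =
         lin (R23 (R_sigma \<rho> \<sigma>)) (R12 (R_sigma \<rho> \<sigma>) (m, n, p))"
proof -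
  have D_swap: "lin (\<lambda>(b1, b2). lin (\<lambda>(z, e). lin (\<lambda>(x, a).
      smul (\<sigma> b2 e * \<sigma> a b1) (bv (x, y, z))) (\<rho> m)) (\<rho> p)) (\<Delta> b) =
    lin (\<lambda>(b1, b2). lin (\<lambda>(z, e). lin (\<lambda>(x, a).
      smul (\<sigma> a b2 * \<sigma> b1 e) (bv (x, y, z))) (\<rho> m)) (\<rho> p)) (\<Delta> b)" for y b
    using strong_D_map_swap_sum[OF assms(2), where g = snd and w = "\<rho> p"
        and F = "\<lambda>b z. lin (\<lambda>(x, a). smul (\<sigma> a b) (bv (x, y, fst z))) (\<rho> m)"]
    by (simp add: lin_fun_smul[symmetric] case_prod_beta' mult.commute)
  show ?thesis
    unfolding R12_R23_R_sigma[OF assms(1)] R23_R12_R_sigma[OF assms(1)] D_swap ..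
qed

theorem proposition4p2:
  fixes \<Delta> :: "'c \<Rightarrow> ('c \<times> 'c \<Rightarrow>\<^sub>0 'k::field)"
    and \<epsilon> :: "'c \<Rightarrow> 'k"
    and \<sigma> :: "'c \<Rightarrow> 'c \<Rightarrow> 'k"
    and \<rho> :: "'m \<Rightarrow> ('m \<times> 'c \<Rightarrow>\<^sub>0 'k)"
  assumes "coalgebra \<Delta> \<epsilon>"
    and "strong_D_map \<Delta> \<sigma>"
    and "right_comodule \<Delta> \<epsilon> \<rho>"
  shows "long_equation (R_sigma \<rho> \<sigma>)"
  unfolding long_equation_def lcomp_def
  using R12_R13_R_sigma_commute[OF assms(3,2)] R12_R23_R_sigma_commute[OF assms(3,2)]
  by auto

end
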